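(* Let $d\ge2$ be an integer and $(p_{nm})_{n,m\in\{0,\dots,d-1\}}$ a probability vector with $p_{0m}=0$ for all $m\in\{1,\dots,d-1\}$. Let the initial shared state be $\sum_{n,m}p_{nm}|\Phi^{n,m}\rangle\langle\Phi^{n,m}|$ (fidelity $p_{00}$), let $\mathcal{N}$ be the qudit Pauli channel with probabilities $p_{nm}$, and let $F_N$ be the fidelity $\langle\Phi^{0,0}|\rho_N|\Phi^{0,0}\rangle$ after $N$ successful rounds of the single-carrier protocol without adaptive pre-processing. Then $F_N\to1$ as $N\to\infty$ if and only if $$p_{00}>\max_{n\in\{1,\dots,d-1\}}p_{X=n},\qquad p_{X=n}:=\sum_{m=0}^{d-1}p_{nm}.$$
   Context: $\omega=e^{2\pi i/d}$; on $\mathbb{C}^d$, $X|j\rangle=|(j+1)\bmod d\rangle$, $Z|j\rangle=\omega^j|j\rangle$. Bell states $|\Phi^{n,m}\rangle=\frac1{\sqrt d}\sum_{j=0}^{d-1}\omega^{mj}|j,(j+n)\bmod d\rangle$. The qudit Pauli channel is $\mathcal{N}(\rho)=\sum_{n,m}p_{nm}Z^mX^n\rho X^{-n}Z^{-m}$. Single-carrier round: Alice prepares a carrier $T$ in $|0\rangle$ and applies $|j\rangle_A|k\rangle_T\mapsto|j\rangle_A|(j+k)\bmod d\rangle_T$; the carrier passes through $\mathcal{N}$; Bob applies $|j\rangle_B|k\rangle_T\mapsto|j\rangle_B|(k-j)\bmod d\rangle_T$ and measures $T$ in the computational basis; the round succeeds iff the outcome is $0$, and then the shared state is kept. Successive rounds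 act on the kept state, each with a fresh carrier through $\mathcal{N}$. *)

theory Defs
  imports Complex_Main
begin

type_synonym idx2 = "nat \<times> nat"
type_synonym idx3 = "nat \<times> nat \<times> nat"

definition omega :: "nat \<Rightarrow> complex" where
  "omega d = cis (2 * pi / real d)"

definition I2 :: "nat \<Rightarrow> idx2 set" where "I2 d = {0..<d} \<times> {0..<d}"
definition I3 :: "nat \<Rightarrow> idx3 set" where "I3 d = {0..<d} \<times> {0..<d} \<times> {0..<d}"

text \<open>Operators on A (x) B (x) T as matrices indexed by basis triples (a,b,t).\<close>
definition mmul3 :: "nat \<Rightarrow> (idx3 \<Rightarrow> idx3 \<Rightarrow> complex) \<Rightarrow> (idx3 \<Rightarrow> idx3 \<Rightarrow> complex) \<Rightarrow> idx3 \<Rightarrow> idx3 \<Rightarrow> complex" where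
  "mmul3 d A B = (\<lambda>i j. \<Sum>k\<in>I3 d. A i k * B k j)"

definition adj3 :: "(idx3 \<Rightarrow> idx3 \<Rightarrow> complex) \<Rightarrow> idx3 \<Rightarrow> idx3 \<Rightarrow> complex" where
  "adj3 A = (\<lambda>i j. cnj (A j i))"

definition conj3 :: "nat \<Rightarrow> (idx3 \<Rightarrow> idx3 \<Rightarrow> complex) \<Rightarrow> (idx3 \<Rightarrow> idx3 \<Rightarrow> complex) \<Rightarrow> idx3 \<Rightarrow> idx3 \<Rightarrow> complex" where
  "conj3 d U \<rho> = mmul3 d (mmul3 d U \<rho>) (adj3 U)"

text \<open>Alice: |j>_A |k>_T -> |j>_A |(j+k) mod d>_T.\<close>
definition alice_gate :: "nat \<Rightarrow> idx3 \<Rightarrow> idx3 \<Rightarrow> complex" where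
  "alice_gate d = (\<lambda>(a,b,t) (a',b',t'). if a = a' \<and> b = b' \<and> t = (a' + t') mod d then 1 else 0)"

text \<open>Bob: |j>_B |k>_T -> |j>_B |(k-j) mod d>_T  (indices below d).\<close>
definition bob_gate :: "nat \<Rightarrow> idx3 \<Rightarrow> idx3 \<Rightarrow> complex" where
  "bob_gate d = (\<lambda>(a,b,t) (a',b',t'). if a = a' \<and> b = b' \<and> t = (t' + d - b') mod d then 1 else 0)"

text \<open>The operator Z^m X^n acting on the carrier T (identity on A,B).\<close>
definition pauliT :: "nat \<Rightarrow> nat \<Rightarrow> nat \<Rightarrow> idx3 \<Rightarrow> idx3 \<Rightarrow> complex" where
  "pauliT d n m = (\<lambda>(a,b,t) (a',b',t').
     if a = a' \<and> b = b' \<and> t = (t' + n) mod d then omega d ^ (m * t) else 0)"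

text \<open>Qudit Pauli channel on T; X^{-n} Z^{-m} is the adjoint of the unitary Z^m X^n.\<close>
definition channelT :: "nat \<Rightarrow> (nat \<Rightarrow> nat \<Rightarrow> real) \<Rightarrow> (idx3 \<Rightarrow> idx3 \<Rightarrow> complex) \<Rightarrow> idx3 \<Rightarrow> idx3 \<Rightarrow> complex" where
  "channelT d p \<rho> = (\<lambda>i j. \<Sum>n<d. \<Sum>m<d. complex_of_real (p n m) * conj3 d (pauliT d n m) \<rho> i j)"

text \<open>rho_AB (x) |0><0|_T\<close>
definition append_carrier :: "(idx2 \<Rightarrow> idx2 \<Rightarrow> complex) \<Rightarrow> idx3 \<Rightarrow> idx3 \<Rightarrow> complex" where
  "append_carrier \<rho> = (\<lambda>(a,b,t) (a',b',t'). if t = 0 \<and> t' = 0 then \<rho> (a,b) (a',b') else 0)"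

text \<open>Unnormalised post-measurement AB state for carrier outcome 0: (I (x) <0|) sigma (I (x) |0>).\<close>
definition proj0 :: "(idx3 \<Rightarrow> idx3 \<Rightarrow> complex) \<Rightarrow> idx2 \<Rightarrow> idx2 \<Rightarrow> complex" where
  "proj0 \<sigma> = (\<lambda>(a,b) (a',b'). \<sigma> (a,b,0) (a',b',0))"

definition tr2 :: "nat \<Rightarrow> (idx2 \<Rightarrow> idx2 \<Rightarrow> complex) \<Rightarrow> complex" where
  "tr2 d \<rho> = (\<Sum>i\<in>I2 d. \<rho> i i)"

definition protocol_round :: "nat \<Rightarrow> (nat \<Rightarrow> nat \<Rightarrow> real) \<Rightarrow> (idx2 \<Rightarrow> idx2 \<Rightarrow> complex) \<Rightarrow> idx2 \<Rightarrow> idx2 \<Rightarrow> complex" where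
  "protocol_round d p \<rho> =
     (let \<sigma> = proj0 (conj3 d (bob_gate d) (channelT d p (conj3 d (alice_gate d) (append_carrier \<rho>))))
      in (\<lambda>i j. \<sigma> i j / tr2 d \<sigma>))"

text \<open>Bell state |Phi^{n,m}> as a coefficient vector on basis pairs (a,b).\<close>
definition bell :: "nat \<Rightarrow> nat \<Rightarrow> nat \<Rightarrow> idx2 \<Rightarrow> complex" where
  "bell d n m = (\<lambda>(a,b). if a < d \<and> b < d \<and> b = (a + n) mod d
       then omega d ^ (m * a) / complex_of_real (sqrt (real d)) else 0)"

definition bell_mixture :: "nat \<Rightarrow> (nat \<Rightarrow> nat \<Rightarrow> real) \<Rightarrow> idx2 \<Rightarrow> idx2 \<Rightarrow> complex" where
  "bell_mixture d p = (\<lambda>i j. \<Sum>n<d. \<Sum>m<d. complex_of_real (p n m) * bell d n m i * cnj (bell d n m j))"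

definition fidelity :: "nat \<Rightarrow> (idx2 \<Rightarrow> idx2 \<Rightarrow> complex) \<Rightarrow> complex" where
  "fidelity d \<rho> = (\<Sum>i\<in>I2 d. \<Sum>j\<in>I2 d. cnj (bell d 0 0 i) * \<rho> i j * bell d 0 0 j)"

definition rho_N :: "nat \<Rightarrow> (nat \<Rightarrow> nat \<Rightarrow> real) \<Rightarrow> nat \<Rightarrow> idx2 \<Rightarrow> idx2 \<Rightarrow> complex" where
  "rho_N d p N = (protocol_round d p ^^ N) (bell_mixture d p)"

end

theory Submission
  imports Defs
begin

text \<open>
A successful round acts entrywise on the two-qudit state in the computational basis.
Tracing the carrier back through Bob's gate, the Pauli error Z^m X^n and Alice's gate,
the entry at (a,b),(a',b') survives only if b - a = b' - a' = n (mod d), and it is then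
weighted by p_{nm} times a phase. Hence a round multiplies the diagonal entry at (a,b) by
the marginal p_{X = b - a} and, since p_{0m} = 0 for m > 0, every entry at (a,a),(a',a')
by p_{00}. These two families of entries determine the trace and the fidelity, so after
N rounds F_N = p_{00}^(N+1) / (sum of p_{X=n}^(N+1) over n). Such a share tends to 1
exactly when p_{00} strictly exceeds every other p_{X=n}; otherwise a competitor at least
as large keeps it below 1/2.
\<close>

lemma LIMSEQ_power_share_1_iff:
  fixes x :: "'a \<Rightarrow> real"
  assumes "finite A" "i \<in> A" "A - {i} \<noteq> {}" and nonneg: "\<And>j. j \<in> A \<Longrightarrow> 0 \<le> x j"
  shows "(\<lambda>k. x i ^ k / (\<Sum>j\<in>A. x j ^ k)) \<longlonglongrightarrow> 1 \<longleftrightarrow> (\<forall>j\<in>A - {i}. x j < x i)"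
proof
  assume lim: "(\<lambda>k. x i ^ k / (\<Sum>j\<in>A. x j ^ k)) \<longlonglongrightarrow> 1"
  show "\<forall>j\<in>A - {i}. x j < x i"
  proof (rule ccontr)
    assume "\<not> ?thesis"
    then obtain j where j: "j \<in> A" "j \<noteq> i" "x i \<le> x j" by (auto simp: not_less)
    have "x i ^ k / (\<Sum>j\<in>A. x j ^ k) \<le> 1 / 2" for k
    proof -
      have "2 * x i ^ k \<le> x i ^ k + x j ^ k"
        using j nonneg[OF \<open>i \<in> A\<close>] by (simp add: power_mono)
      also have "\<dots> = (\<Sum>l\<in>{i, j}. x l ^ k)"
        using j by simp
      also have "\<dots> \<le> (\<Sum>l\<in>A. x l ^ k)"
        using assms j by (intro sum_mono2) auto
      finally have "2 * x i ^ k \<le> (\<Sum>l\<in>A. x l ^ k)" .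
      moreover have "0 \<le> x i ^ k"
        using nonneg[OF \<open>i \<in> A\<close>] by simp
      ultimately show ?thesis
        by (cases "(\<Sum>l\<in>A. x l ^ k) = 0") (simp_all add: divide_le_eq)
    qed
    then have "1 \<le> (1 / 2 :: real)"
      by (intro LIMSEQ_le_const2[OF lim]) auto
    then show False by simp
  qed
next
  assume dom: "\<forall>j\<in>A - {i}. x j < x i"
  then have pos: "0 < x i"
    using assms by (metis Diff_iff all_not_in_conv le_less_trans)
  have "(\<lambda>k. (x j / x i) ^ k) \<longlonglongrightarrow> (if j = i then 1 else 0)" if "j \<in> A" for j
  proof (cases "j = i")
    case False
    then have "norm (x j / x i) < 1" using dom that nonneg pos by simp
    then show ?thesis using False by (simp add: LIMSEQ_power_zero)
  qed (use pos in simp)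
  then have "(\<lambda>k. \<Sum>j\<in>A. (x j / x i) ^ k) \<longlonglongrightarrow> (\<Sum>j\<in>A. if j = i then 1 else 0)"
    by (rule tendsto_sum)
  then have "(\<lambda>k. 1 / (\<Sum>j\<in>A. (x j / x i) ^ k)) \<longlonglongrightarrow> 1 / 1"
    using assms by (intro tendsto_divide tendsto_const) simp_all
  moreover have "1 / (\<Sum>j\<in>A. (x j / x i) ^ k) = x i ^ k / (\<Sum>j\<in>A. x j ^ k)" for k
    using pos by (simp add: power_divide sum_divide_distrib[symmetric])
  ultimately show "(\<lambda>k. x i ^ k / (\<Sum>j\<in>A. x j ^ k)) \<longlonglongrightarrow> 1" by simp
qed

lemma mod_less_double: "(n::nat) < 2 * d \<Longrightarrow> n mod d = (if n < d then n else n - d)"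
  by (metis le_mod_geq less_diff_conv2 linorder_not_le mod_less mult_2)

lemma eq_add_mod_iff:
  fixes x y t :: nat
  assumes "x < d" "y < d"
  shows "t = (x + y) mod d \<longleftrightarrow> t < d \<and> y = (t + d - x) mod d"
proof (cases "t < d")
  case True
  then show ?thesis
    using assms mod_less_double[of "x + y" d] mod_less_double[of "t + d - x" d] by auto
next
  case False
  then show ?thesis using assms by auto
qed

lemma finite_I3 [simp]: "finite (I3 d)"
  by (simp add: I3_def)

lemma conj3_monomial:
  assumes U: "\<And>i k. k \<in> I3 d \<Longrightarrow> U i k = (if P i \<and> k = g i then c i else 0)"
    and g: "\<And>i. P i \<Longrightarrow> g i \<in> I3 d"
  shows "conj3 d U M i j = (if P i \<and> P j then c i * cnj (c j) * M (g i) (g j) else 0)"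
proof -
  have row: "mmul3 d U M i k = (if P i then c i * M (g i) k else 0)" for k
  proof -
    have "mmul3 d U M i k = (\<Sum>l\<in>I3 d. if P i \<and> l = g i then c i * M l k else 0)"
      unfolding mmul3_def by (rule sum.cong) (auto simp: U)
    then show ?thesis using g[of i] by (cases "P i") auto
  qed
  have "conj3 d U M i j = (\<Sum>k\<in>I3 d. if P j \<and> k = g j then mmul3 d U M i k * cnj (c j) else 0)"
    unfolding conj3_def mmul3_def[of d "mmul3 d U M"] adj3_def by (rule sum.cong) (auto simp: U)
  then show ?thesis using g[of j] by (cases "P j") (auto simp: row)
qed

lemma conj3_alice_gate:
  "conj3 d (alice_gate d) M (a,b,t) (a',b',t') =
    (if (a,b,t) \<in> I3 d \<and> (a',b',t') \<in> I3 d
     then M (a,b,(t+d-a) mod d) (a',b',(t'+d-a') mod d) else 0)"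
proof -
  define g :: "idx3 \<Rightarrow> idx3" where "g = (\<lambda>(a,b,t). (a, b, (t+d-a) mod d))"
  have gate: "alice_gate d i k = (if i \<in> I3 d \<and> k = g i then 1 else 0)" if "k \<in> I3 d" for i k
    using that eq_add_mod_iff[of "fst k" d "snd (snd k)" "snd (snd i)"]
    by (cases i; cases k) (auto simp: alice_gate_def I3_def g_def)
  have "g i \<in> I3 d" if "i \<in> I3 d" for i
    using that by (auto simp: g_def I3_def)
  from conj3_monomial[where P="\<lambda>i. i \<in> I3 d" and c="\<lambda>_. 1", OF gate this]
  show ?thesis by (simp add: g_def I3_def)
qed

lemma conj3_bob_gate:
  "conj3 d (bob_gate d) M (a,b,t) (a',b',t') =
    (if (a,b,t) \<in> I3 d \<and> (a',b',t') \<in> I3 d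
     then M (a,b,(t+b) mod d) (a',b',(t'+b') mod d) else 0)"
proof -
  define g :: "idx3 \<Rightarrow> idx3" where "g = (\<lambda>(a,b,t). (a, b, (t+b) mod d))"
  have gate: "bob_gate d i k = (if i \<in> I3 d \<and> k = g i then 1 else 0)" if "k \<in> I3 d" for i k
    using that eq_add_mod_iff[of "fst (snd k)" d "snd (snd i)" "snd (snd k)"]
    by (cases i; cases k; cases "snd (snd i) < d") (auto simp: bob_gate_def I3_def g_def add.commute)
  have "g i \<in> I3 d" if "i \<in> I3 d" for i
    using that by (auto simp: g_def I3_def)
  from conj3_monomial[where P="\<lambda>i. i \<in> I3 d" and c="\<lambda>_. 1", OF gate this]
  show ?thesis by (simp add: g_def I3_def)
qed

lemma conj3_pauliT:
  assumes "n < d"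
  shows "conj3 d (pauliT d n m) M (a,b,t) (a',b',t') =
    (if (a,b,t) \<in> I3 d \<and> (a',b',t') \<in> I3 d
     then omega d ^ (m*t) * cnj (omega d ^ (m*t')) * M (a,b,(t+d-n) mod d) (a',b',(t'+d-n) mod d)
     else 0)"
proof -
  define g :: "idx3 \<Rightarrow> idx3" where "g = (\<lambda>(a,b,t). (a, b, (t+d-n) mod d))"
  define c :: "idx3 \<Rightarrow> complex" where "c = (\<lambda>(a,b,t). omega d ^ (m*t))"
  have gate: "pauliT d n m i k = (if i \<in> I3 d \<and> k = g i then c i else 0)" if "k \<in> I3 d" for i k
    using that assms eq_add_mod_iff[of n d "snd (snd k)" "snd (snd i)"]
    by (cases i; cases k) (auto simp: pauliT_def I3_def g_def c_def add.commute)
  have "g i \<in> I3 d" if "i \<in> I3 d" for i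
    using that by (auto simp: g_def I3_def)
  from conj3_monomial[where P="\<lambda>i. i \<in> I3 d", OF gate this]
  show ?thesis by (simp add: g_def c_def I3_def)
qed

lemma omega_power_mult_cnj_power [simp]: "omega d ^ k * cnj (omega d) ^ k = 1"
proof -
  have "norm (omega d ^ k) = 1" by (simp add: omega_def norm_power)
  then show ?thesis using complex_norm_square[of "omega d ^ k"] by simp
qed

text \<open>The n with b = (a + n) mod d, i.e. the X-shift of the Bell states containing |a,b>.\<close>
definition x_shift :: "nat \<Rightarrow> nat \<Rightarrow> nat \<Rightarrow> nat" where
  "x_shift d a b = (b + d - a) mod d"

definition prob_X :: "nat \<Rightarrow> (nat \<Rightarrow> nat \<Rightarrow> real) \<Rightarrow> nat \<Rightarrow> real" where
  "prob_X d p n = (\<Sum>m<d. p n m)"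

lemma x_shift_less: "0 < d \<Longrightarrow> x_shift d a b < d"
  by (simp add: x_shift_def)

lemma x_shift_self [simp]: "x_shift d a a = 0"
  by (simp add: x_shift_def)

lemma bell_support_iff:
  assumes "a < d" "b < d" "n < d"
  shows "b = (a + n) mod d \<longleftrightarrow> n = x_shift d a b"
  using assms eq_add_mod_iff[of a d n b] by (simp add: x_shift_def)

lemma sum_x_shift:
  assumes "a < d"
  shows "(\<Sum>b<d. f (x_shift d a b)) = (\<Sum>n<d. f n)"
proof (rule sum.reindex_bij_witness[where j="x_shift d a" and i="\<lambda>n. (a + n) mod d"])
  fix n assume "n \<in> {..<d}"
  then show "x_shift d a ((a + n) mod d) = n" "(a + n) mod d \<in> {..<d}"
    using assms bell_support_iff[of a d "(a + n) mod d" n] by auto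
next
  fix b assume "b \<in> {..<d}"
  then show "(a + x_shift d a b) mod d = b" "x_shift d a b \<in> {..<d}"
    using assms bell_support_iff[of a d b "x_shift d a b"] x_shift_less[of d a b] by auto
qed simp

definition postselected ::
  "nat \<Rightarrow> (nat \<Rightarrow> nat \<Rightarrow> real) \<Rightarrow> (idx2 \<Rightarrow> idx2 \<Rightarrow> complex) \<Rightarrow> idx2 \<Rightarrow> idx2 \<Rightarrow> complex" where
  "postselected d p \<rho> =
     proj0 (conj3 d (bob_gate d) (channelT d p (conj3 d (alice_gate d) (append_carrier \<rho>))))"

lemma protocol_round_eq:
  "protocol_round d p \<rho> = (\<lambda>i j. postselected d p \<rho> i j / tr2 d (postselected d p \<rho>))"
  unfolding protocol_round_def postselected_def Let_def ..

text \<open>Pulling the carrier index b back through the X^n part of the error and Alice's gate;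
  the round keeps the entry iff the result is the carrier's initial value 0.\<close>
lemma carrier_returns_zero_iff:
  fixes a b n :: nat
  assumes "a < d" "b < d" "n < d"
  shows "((b + d - n) mod d + d - a) mod d = 0 \<longleftrightarrow> n = x_shift d a b"
proof -
  define u where "u = (b + d - n) mod d"
  have "u < d" using assms by (simp add: u_def)
  then have "(u + d - a) mod d = 0 \<longleftrightarrow> u = a"
    using mod_less_double[of "u + d - a" d] assms by auto
  moreover have "u = a \<longleftrightarrow> n = x_shift d a b"
    unfolding u_def x_shift_def
    using mod_less_double[of "b + d - n" d] mod_less_double[of "b + d - a" d] assms by auto
  ultimately show ?thesis unfolding u_def by simp
qed

lemma postselected_entry:
  assumes "a < d" "b < d" "a' < d" "b' < d"
  shows "postselected d p \<rho> (a,b) (a',b') =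
    (if x_shift d a b = x_shift d a' b'
     then (\<Sum>m<d. of_real (p (x_shift d a b) m) * (omega d ^ (m*b) * cnj (omega d ^ (m*b'))))
          * \<rho> (a,b) (a',b')
     else 0)" (is "_ = ?rhs")
proof -
  have "postselected d p \<rho> (a,b) (a',b') = (\<Sum>n<d. \<Sum>m<d. of_real (p n m) *
      (omega d ^ (m*b) * cnj (omega d ^ (m*b')) *
       (if n = x_shift d a b \<and> n = x_shift d a' b' then \<rho> (a,b) (a',b') else 0)))"
    unfolding postselected_def proj0_def using assms
    by (simp add: conj3_bob_gate channelT_def I3_def, intro sum.cong refl)
      (simp add: conj3_pauliT conj3_alice_gate append_carrier_def I3_def carrier_returns_zero_iff)
  also have "\<dots> = (\<Sum>n<d. if n = x_shift d a b \<and> n = x_shift d a' b' then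
      (\<Sum>m<d. of_real (p n m) * (omega d ^ (m*b) * cnj (omega d ^ (m*b')))) * \<rho> (a,b) (a',b')
      else 0)"
    by (intro sum.cong refl) (auto simp: sum_distrib_right mult.assoc)
  also have "\<dots> = ?rhs"
    using assms x_shift_less[of d a b]
    by (cases "x_shift d a b = x_shift d a' b'") (auto simp: sum.delta' intro!: sum.neutral)
  finally show ?thesis .
qed

lemma postselected_diagonal:
  assumes "a < d" "b < d"
  shows "postselected d p \<rho> (a,b) (a,b) = of_real (prob_X d p (x_shift d a b)) * \<rho> (a,b) (a,b)"
  using assms by (simp add: postselected_entry prob_X_def)

lemma postselected_bell_block:
  assumes p0: "\<forall>m\<in>{1..<d}. p 0 m = 0" and "a < d" "a' < d"
  shows "postselected d p \<rho> (a,a) (a',a') = of_real (p 0 0) * \<rho> (a,a) (a',a')"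
proof -
  have "(\<Sum>m<d. of_real (p 0 m) * (omega d ^ (m*a) * cnj (omega d ^ (m*a'))))
      = (\<Sum>m<d. if m = 0 then of_real (p 0 0) else 0 :: complex)"
    using p0 by (intro sum.cong refl) auto
  then show ?thesis using assms by (simp add: postselected_entry)
qed

lemma of_real_sqrt_mult_self [simp]:
  "of_real (sqrt (real n)) * of_real (sqrt (real n)) = (of_nat n :: 'a::real_algebra_1)"
  by (simp flip: of_real_mult)

lemma sum_I2: "(\<Sum>i\<in>I2 d. f i) = (\<Sum>a<d. \<Sum>b<d. f (a,b))"
  by (simp add: I2_def sum.cartesian_product lessThan_atLeast0)

lemma bell_zero_zero: "bell d 0 0 (a,b) = (if a < d \<and> b = a then 1 / of_real (sqrt (real d)) else 0)"
  by (auto simp: bell_def)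

lemma sum_I2_mult_bell_zero_zero:
  "(\<Sum>j\<in>I2 d. f j * bell d 0 0 j) = (\<Sum>a<d. f (a,a)) / of_real (sqrt (real d))"
  by (simp add: sum_I2 bell_zero_zero sum_divide_distrib if_distrib[where f="\<lambda>x. _ * x"]
      cong: if_cong)

lemma cnj_bell_zero_zero [simp]: "cnj (bell d 0 0 i) = bell d 0 0 i"
  by (cases i) (simp add: bell_zero_zero)

lemma fidelity_eq_bell_block:
  "fidelity d \<rho> = (\<Sum>a<d. \<Sum>a'<d. \<rho> (a,a) (a',a')) / of_nat d"
proof -
  have "fidelity d \<rho> = (\<Sum>i\<in>I2 d. (\<Sum>j\<in>I2 d. \<rho> i j * bell d 0 0 j) * bell d 0 0 i)"
    unfolding fidelity_def sum_distrib_right by (simp add: mult_ac)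
  also have "\<dots> = (\<Sum>a<d. \<Sum>a'<d. \<rho> (a,a) (a',a')) / (of_real (sqrt (real d)) * of_real (sqrt (real d)))"
    by (simp add: sum_I2_mult_bell_zero_zero sum_divide_distrib)
  finally show ?thesis by simp
qed

lemma bell_mult_cnj:
  assumes "a < d" "b < d" "n < d"
  shows "bell d n m (a,b) * cnj (bell d n m (a,b)) = (if n = x_shift d a b then 1 / of_nat d else 0)"
  using assms bell_support_iff[OF assms] by (simp add: bell_def complex_cnj_divide)

lemma bell_mixture_diagonal:
  assumes "a < d" "b < d"
  shows "bell_mixture d p (a,b) (a,b) = of_real (prob_X d p (x_shift d a b) / real d)"
proof -
  have "bell_mixture d p (a,b) (a,b) =
      (\<Sum>n<d. if n = x_shift d a b then (\<Sum>m<d. of_real (p n m)) / of_nat d else 0)"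
    unfolding bell_mixture_def using assms
    by (intro sum.cong refl) (simp add: mult.assoc bell_mult_cnj sum_divide_distrib)
  then show ?thesis using assms x_shift_less[of d a b] by (simp add: prob_X_def)
qed

lemma bell_mixture_bell_block:
  assumes p0: "\<forall>m\<in>{1..<d}. p 0 m = 0" and "a < d" "a' < d"
  shows "bell_mixture d p (a,a) (a',a') = of_real (p 0 0 / real d)"
proof -
  have "(\<Sum>m<d. of_real (p n m) * bell d n m (a,a) * cnj (bell d n m (a',a'))) =
      (if n = 0 then of_real (p 0 0 / real d) else 0)" if "n < d" for n
  proof (cases "n = 0")
    case True
    have "(\<Sum>m<d. of_real (p n m) * bell d n m (a,a) * cnj (bell d n m (a',a'))) =
        (\<Sum>m<d. if m = 0 then of_real (p 0 0 / real d) else 0)"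
      using True p0 assms by (intro sum.cong refl) (auto simp: bell_def)
    then show ?thesis using True assms by simp
  next
    case False
    then show ?thesis using that assms bell_support_iff[of a d a n] by (simp add: bell_def)
  qed
  then show ?thesis using assms unfolding bell_mixture_def by simp
qed

definition prob_X_power_sum :: "nat \<Rightarrow> (nat \<Rightarrow> nat \<Rightarrow> real) \<Rightarrow> nat \<Rightarrow> real" where
  "prob_X_power_sum d p k = (\<Sum>n<d. prob_X d p n ^ k)"

text \<open>Only two families of entries are tracked: the diagonal, which determines the trace,
  and the block on the states |a,a>, which determines the fidelity.\<close>
definition bell_profile ::
  "nat \<Rightarrow> (nat \<Rightarrow> nat \<Rightarrow> real) \<Rightarrow> real \<Rightarrow> nat \<Rightarrow> (idx2 \<Rightarrow> idx2 \<Rightarrow> complex) \<Rightarrow> bool" where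
  "bell_profile d p c k \<rho> \<longleftrightarrow>
     (\<forall>a<d. \<forall>b<d. \<rho> (a,b) (a,b) = of_real (c * prob_X d p (x_shift d a b) ^ k)) \<and>
     (\<forall>a<d. \<forall>a'<d. \<rho> (a,a) (a',a') = of_real (c * p 0 0 ^ k))"

lemma bell_profile_bell_mixture:
  assumes "\<forall>m\<in>{1..<d}. p 0 m = 0"
  shows "bell_profile d p (1 / real d) 1 (bell_mixture d p)"
  using assms by (simp add: bell_profile_def bell_mixture_diagonal bell_mixture_bell_block)

lemma bell_profile_postselected:
  assumes "\<forall>m\<in>{1..<d}. p 0 m = 0" and "bell_profile d p c k \<rho>"
  shows "bell_profile d p c (Suc k) (postselected d p \<rho>)"
  using assms
  by (simp add: bell_profile_def postselected_diagonal postselected_bell_block mult_ac flip: of_real_mult)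

lemma bell_profile_scale:
  assumes "bell_profile d p c k \<rho>"
  shows "bell_profile d p (c / z) k (\<lambda>i j. \<rho> i j / of_real z)"
  using assms by (simp add: bell_profile_def of_real_divide)

lemma tr2_bell_profile:
  assumes "bell_profile d p c k \<rho>"
  shows "tr2 d \<rho> = of_real (c * real d * prob_X_power_sum d p k)"
proof -
  have "tr2 d \<rho> = of_real (\<Sum>a<d. \<Sum>b<d. c * prob_X d p (x_shift d a b) ^ k)"
    using assms by (simp add: tr2_def sum_I2 bell_profile_def)
  also have "(\<Sum>a<d. \<Sum>b<d. c * prob_X d p (x_shift d a b) ^ k) = (\<Sum>a<d. c * prob_X_power_sum d p k)"
    by (intro sum.cong refl)
      (simp add: sum_x_shift[where f="\<lambda>n. c * prob_X d p n ^ k"] prob_X_power_sum_def sum_distrib_left)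
  finally show ?thesis by simp
qed

lemma fidelity_bell_profile:
  assumes "bell_profile d p c k \<rho>"
  shows "fidelity d \<rho> = of_real (c * real d * p 0 0 ^ k)"
proof -
  have "fidelity d \<rho> = of_real (\<Sum>a<d. \<Sum>a'<d. c * p 0 0 ^ k) / of_nat d"
    using assms by (simp add: fidelity_eq_bell_block bell_profile_def)
  then show ?thesis by (cases "d = 0") (simp_all add: power2_eq_square)
qed

lemma bell_profile_protocol_round:
  assumes "\<forall>m\<in>{1..<d}. p 0 m = 0" and "bell_profile d p c k \<rho>"
    and "c \<noteq> 0" and "prob_X_power_sum d p (Suc k) \<noteq> 0"
  shows "bell_profile d p (1 / (real d * prob_X_power_sum d p (Suc k))) (Suc k) (protocol_round d p \<rho>)"
proof -
  have post: "bell_profile d p c (Suc k) (postselected d p \<rho>)"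
    using assms(1,2) by (rule bell_profile_postselected)
  have "protocol_round d p \<rho> =
      (\<lambda>i j. postselected d p \<rho> i j / of_real (c * real d * prob_X_power_sum d p (Suc k)))"
    by (simp add: protocol_round_eq tr2_bell_profile[OF post])
  moreover have "c / (c * real d * prob_X_power_sum d p (Suc k)) = 1 / (real d * prob_X_power_sum d p (Suc k))"
    using assms(3) by simp
  ultimately show ?thesis using bell_profile_scale[OF post] by metis
qed

lemma prob_X_power_sum_pos:
  assumes "\<forall>n<d. \<forall>m<d. p n m \<ge> 0" and "(\<Sum>n<d. \<Sum>m<d. p n m) = 1"
  shows "0 < prob_X_power_sum d p k"
proof -
  have nonneg: "0 \<le> prob_X d p n" if "n < d" for n
    using assms(1) that by (auto simp: prob_X_def intro: sum_nonneg)
  have "\<exists>n<d. 0 < prob_X d p n"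
  proof (rule ccontr)
    assume "\<not> ?thesis"
    then have "prob_X d p n \<le> 0" if "n < d" for n
      using that by (meson not_less)
    then have "(\<Sum>n<d. prob_X d p n) \<le> 0" by (intro sum_nonpos) simp
    then show False using assms(2) by (simp add: prob_X_def)
  qed
  then obtain n where "n < d" "0 < prob_X d p n" by blast
  then show ?thesis
    unfolding prob_X_power_sum_def using nonneg by (intro sum_pos2[of _ n]) auto
qed

lemma bell_profile_rho_N:
  assumes "\<forall>n<d. \<forall>m<d. p n m \<ge> 0" and "(\<Sum>n<d. \<Sum>m<d. p n m) = 1"
    and "\<forall>m\<in>{1..<d}. p 0 m = 0"
  shows "bell_profile d p (1 / (real d * prob_X_power_sum d p (Suc N))) (Suc N) (rho_N d p N)"
proof (induction N)
  case 0
  have "prob_X_power_sum d p 1 = 1"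
    using assms(2) by (simp add: prob_X_power_sum_def prob_X_def)
  then show ?case
    using bell_profile_bell_mixture[of d p, OF assms(3)] by (simp add: rho_N_def)
next
  case (Suc N)
  have "d \<noteq> 0" using assms(2) by (intro notI) simp
  moreover have "prob_X_power_sum d p k \<noteq> 0" for k
    using prob_X_power_sum_pos[OF assms(1,2)] by (metis order_less_irrefl)
  ultimately show ?case
    using bell_profile_protocol_round[OF assms(3) Suc] by (simp add: rho_N_def)
qed

lemma fidelity_rho_N:
  assumes "\<forall>n<d. \<forall>m<d. p n m \<ge> 0" and "(\<Sum>n<d. \<Sum>m<d. p n m) = 1"
    and "\<forall>m\<in>{1..<d}. p 0 m = 0"
  shows "fidelity d (rho_N d p N) = of_real (p 0 0 ^ Suc N / prob_X_power_sum d p (Suc N))"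
proof -
  have "d \<noteq> 0" using assms(2) by (intro notI) simp
  then show ?thesis
    using fidelity_bell_profile[OF bell_profile_rho_N[OF assms]] by simp
qed

theorem proposition2:
  fixes d :: nat and p :: "nat \<Rightarrow> nat \<Rightarrow> real"
  assumes "d \<ge> 2"
    and "\<forall>n<d. \<forall>m<d. p n m \<ge> 0"
    and "(\<Sum>n<d. \<Sum>m<d. p n m) = 1"
    and "\<forall>m\<in>{1..<d}. p 0 m = 0"
  shows "(\<lambda>N. fidelity d (rho_N d p N)) \<longlonglongrightarrow> 1
     \<longleftrightarrow> p 0 0 > Max ((\<lambda>n. \<Sum>m<d. p n m) ` {1..<d})"
proof -
  have prob_X_0: "prob_X d p 0 = p 0 0"
    using assms(1,4) by (simp add: prob_X_def sum.atLeast_Suc_lessThan lessThan_atLeast0)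
  have one: "1 \<in> {..<d} - {0}"
    using assms(1) by simp
  have "(\<lambda>N. fidelity d (rho_N d p N)) \<longlonglongrightarrow> 1 \<longleftrightarrow>
      (\<lambda>N. p 0 0 ^ Suc N / prob_X_power_sum d p (Suc N)) \<longlonglongrightarrow> 1"
    using tendsto_of_real_iff[of "\<lambda>N. p 0 0 ^ Suc N / prob_X_power_sum d p (Suc N)" 1 sequentially]
    by (simp add: fidelity_rho_N[OF assms(2-4)])
  also have "\<dots> \<longleftrightarrow> (\<lambda>k. p 0 0 ^ k / prob_X_power_sum d p k) \<longlonglongrightarrow> 1"
    by (rule filterlim_sequentially_Suc)
  also have "\<dots> \<longleftrightarrow> (\<forall>n\<in>{..<d} - {0}. prob_X d p n < prob_X d p 0)"
    unfolding prob_X_power_sum_def prob_X_0[symmetric] using one assms(2)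
    by (intro LIMSEQ_power_share_1_iff) (auto simp: prob_X_def intro: sum_nonneg)
  also have "\<dots> \<longleftrightarrow> Max (prob_X d p ` ({..<d} - {0})) < p 0 0"
    using one by (subst Max_less_iff) (auto simp: prob_X_0)
  finally show ?thesis
    by (simp add: prob_X_def[abs_def] atLeast1_lessThan_eq_remove0)
qed

end
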